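(* Let $M$ be a matroid, let $k\ge 0$ be an integer, and let $\mathcal{C}$ be a collection of circuits of $M$ such that, for some $J \subseteq E(M)$ with $|J|\leq k$, we have $C\cap C'=J$ for all distinct $C,C'\in\mathcal{C}$. Then, for every subcollection $\{C_1,\dotsc,C_{2^k}\}\subseteq\mathcal{C}$ of size $2^k$, there is a circuit of $M$ contained in $\left(\bigcup_{i=1}^{2^k}C_i\right)-J$. *)

theory Defs
  imports Main
begin

definition matroid :: "'a set \<Rightarrow> ('a set \<Rightarrow> bool) \<Rightarrow> bool" where
  "matroid E indep \<longleftrightarrow>
     finite E \<and>
     (\<forall>I. indep I \<longrightarrow> I \<subseteq> E) \<and>
     indep {} \<and>
     (\<forall>I J. indep J \<and> I \<subseteq> J \<longrightarrow> indep I) \<and>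
     (\<forall>I J. indep I \<and> indep J \<and> card I < card J \<longrightarrow>
        (\<exists>e\<in>J - I. indep (insert e I)))"

definition circuit :: "'a set \<Rightarrow> ('a set \<Rightarrow> bool) \<Rightarrow> 'a set \<Rightarrow> bool" where
  "circuit E indep C \<longleftrightarrow> C \<subseteq> E \<and> \<not> indep C \<and> (\<forall>D. D \<subset> C \<longrightarrow> indep D)"

end

theory Submission
  imports Defs
begin

text \<open>
  We prove a stronger statement by induction on \<open>|J|\<close>: for an independent set \<open>J\<close>, any
  family of at least \<open>2^|J|\<close> circuits whose pairwise intersections lie in \<open>J\<close> has a circuit in
  its union avoiding \<open>J\<close>. For the step fix \<open>e \<in> J\<close>. The members avoiding \<open>e\<close> are kept; the
  members containing \<open>e\<close> are matched in disjoint pairs, and circuit elimination turns each pair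
  into a circuit inside its union avoiding \<open>e\<close>. The new family has at least half the size, and
  its pairwise intersections lie in \<open>J - {e}\<close>, because distinct members come from disjoint sets
  of old members.
\<close>

locale indep_matroid =
  fixes E :: "'a set" and indep :: "'a set \<Rightarrow> bool"
  assumes matroid: "matroid E indep"
begin

lemma finite_ground: "finite E"
  using matroid by (simp add: matroid_def)

lemma indep_subset_ground: "indep I \<Longrightarrow> I \<subseteq> E"
  using matroid by (simp add: matroid_def)

lemma indep_empty: "indep {}"
  using matroid by (simp add: matroid_def)

lemma indep_subset: "indep J \<Longrightarrow> I \<subseteq> J \<Longrightarrow> indep I"
  using matroid unfolding matroid_def by blast

lemma indep_augment:
  "indep I \<Longrightarrow> indep J \<Longrightarrow> card I < card J \<Longrightarrow> \<exists>e\<in>J - I. indep (insert e I)"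
  using matroid unfolding matroid_def by blast

lemma indep_finite: "indep I \<Longrightarrow> finite I"
  using finite_ground indep_subset_ground finite_subset by blast

lemma circuit_finite: "circuit E indep C \<Longrightarrow> finite C"
  using finite_ground finite_subset by (auto simp: circuit_def)

lemma circuit_not_subset_indep: "circuit E indep C \<Longrightarrow> indep I \<Longrightarrow> \<not> C \<subseteq> I"
  using indep_subset by (auto simp: circuit_def)

lemma circuit_subset_eq:
  "circuit E indep C \<Longrightarrow> circuit E indep C' \<Longrightarrow> C \<subseteq> C' \<Longrightarrow> C = C'"
  unfolding circuit_def by blast

lemma indep_inter_circuits:
  assumes "circuit E indep C" "circuit E indep C'" "C \<noteq> C'"
  shows "indep (C \<inter> C')"
proof -
  have "C \<inter> C' \<subset> C"
    using assms circuit_subset_eq[of C C'] by blast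
  then show ?thesis
    using assms(1) by (simp add: circuit_def)
qed

lemma dependent_contains_circuit:
  "X \<subseteq> E \<Longrightarrow> \<not> indep X \<Longrightarrow> \<exists>C. circuit E indep C \<and> C \<subseteq> X"
proof (induction "card X" arbitrary: X rule: less_induct)
  case less
  show ?case
  proof (cases "\<forall>D. D \<subset> X \<longrightarrow> indep D")
    case True
    then show ?thesis
      using less.prems by (auto simp: circuit_def)
  next
    case False
    then obtain D where D: "D \<subset> X" "\<not> indep D"
      by blast
    have "finite X"
      using less.prems(1) finite_ground finite_subset by blast
    then have "card D < card X"
      using D(1) by (rule psubset_card_mono)
    moreover have "D \<subseteq> E"
      using D(1) less.prems(1) by blast
    ultimately obtain C where "circuit E indep C" "C \<subseteq> D"
      using less.hyps D(2) by blast
    then show ?thesis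
      using D(1) by blast
  qed
qed

lemma indep_extend:
  assumes "indep X" "indep Y"
  obtains B where "X \<subseteq> B" "B \<subseteq> X \<union> Y" "indep B" "card Y \<le> card B"
proof -
  let ?P = "\<lambda>B. X \<subseteq> B \<and> B \<subseteq> X \<union> Y \<and> indep B"
  have fin: "finite (X \<union> Y)"
    using assms indep_finite by blast
  have "\<exists>B. ?P B \<and> (\<forall>B'. ?P B' \<longrightarrow> card B' \<le> card B)"
  proof (rule ex_has_greatest_nat)
    show "?P X"
      using assms(1) by blast
    show "\<forall>B. ?P B \<longrightarrow> card B < Suc (card (X \<union> Y))"
      using fin by (simp add: card_mono less_Suc_eq_le)
  qed
  then obtain B where B: "?P B" and maximal: "\<And>B'. ?P B' \<Longrightarrow> card B' \<le> card B"
    by blast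
  have "card Y \<le> card B"
  proof (rule ccontr)
    assume "\<not> card Y \<le> card B"
    then obtain e where e: "e \<in> Y - B" "indep (insert e B)"
      using indep_augment[of B Y] B assms(2) by force
    then have "card (insert e B) \<le> card B"
      using B maximal[of "insert e B"] by blast
    then show False
      using e B indep_finite by simp
  qed
  then show ?thesis
    using that B by blast
qed

lemma circuit_elimination_dependent:
  assumes C1: "circuit E indep C1" and C2: "circuit E indep C2"
    and "C1 \<noteq> C2" and e: "e \<in> C1 \<inter> C2"
  shows "\<not> indep (C1 \<union> C2 - {e})"
proof
  assume Y: "indep (C1 \<union> C2 - {e})"
  have fin: "finite (C1 \<union> C2)"
    using C1 C2 circuit_finite by blast
  obtain f where f: "f \<in> C1" "f \<notin> C2"
    using assms circuit_subset_eq by blast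
  have "indep (C1 - {f})"
    using C1 f by (auto simp: circuit_def)
  \<comment> \<open>Grown inside \<open>C1 \<union> C2\<close> to the size of \<open>C1 \<union> C2 - {e}\<close>, this set must still miss
      \<open>f\<close> and a point of \<open>C2\<close>, so it is too small.\<close>
  then obtain B where B: "C1 - {f} \<subseteq> B" "B \<subseteq> (C1 - {f}) \<union> (C1 \<union> C2 - {e})" "indep B"
    and card_B: "card (C1 \<union> C2 - {e}) \<le> card B"
    using Y by (rule indep_extend)
  have "f \<notin> B"
    using B circuit_not_subset_indep[OF C1] by blast
  moreover obtain g where g: "g \<in> C2" "g \<notin> B"
    using circuit_not_subset_indep[OF C2 \<open>indep B\<close>] by blast
  ultimately have "B \<subseteq> C1 \<union> C2 - {f, g}" and "f \<noteq> g"
    using B f by blast+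
  then have "card B \<le> card (C1 \<union> C2) - 2"
    using fin f g card_mono[of "C1 \<union> C2 - {f, g}" B] by (simp add: card_Diff_subset)
  moreover have "card (C1 \<union> C2 - {e}) = card (C1 \<union> C2) - 1"
    using fin e by simp
  moreover have "card {f, g} \<le> card (C1 \<union> C2)"
    using fin f g by (intro card_mono) auto
  ultimately show False
    using card_B \<open>f \<noteq> g\<close> by simp
qed

lemma circuit_elimination:
  assumes "circuit E indep C1" "circuit E indep C2" "C1 \<noteq> C2" "e \<in> C1 \<inter> C2"
  shows "\<exists>C. circuit E indep C \<and> C \<subseteq> C1 \<union> C2 - {e}"
proof (rule dependent_contains_circuit)
  show "C1 \<union> C2 - {e} \<subseteq> E"
    using assms by (auto simp: circuit_def)
  show "\<not> indep (C1 \<union> C2 - {e})"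
    using circuit_elimination_dependent[OF assms] .
qed

end

lemma half_pairing:
  assumes "finite B"
  obtains B1 p where "B1 \<subseteq> B" "card B1 = card B div 2" "inj_on p B1" "p ` B1 \<subseteq> B - B1"
proof -
  obtain B1 where B1: "B1 \<subseteq> B" "card B1 = card B div 2"
    using obtain_subset_with_card_n[of "card B div 2" B] by auto
  have "finite B1"
    using B1(1) assms finite_subset by blast
  then have "card B1 \<le> card (B - B1)"
    using card_Diff_subset[OF _ B1(1)] B1(2) by linarith
  then obtain p where "inj_on p B1" "p ` B1 \<subseteq> B - B1"
    using card_le_inj[OF \<open>finite B1\<close>] assms by blast
  with B1 show ?thesis
    by (rule that)
qed

lemma inter_unions_of_disjoint_subfamilies:
  assumes meets: "\<forall>a\<in>I. \<forall>b\<in>I. a \<noteq> b \<longrightarrow> f a \<inter> f b \<subseteq> J"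
    and "S \<subseteq> I" "T \<subseteq> I" "S \<inter> T = {}"
  shows "\<Union>(f ` S) \<inter> \<Union>(f ` T) \<subseteq> J"
proof
  fix x
  assume "x \<in> \<Union>(f ` S) \<inter> \<Union>(f ` T)"
  then obtain a b where ab: "a \<in> S" "b \<in> T" "x \<in> f a" "x \<in> f b"
    by blast
  then have "a \<noteq> b"
    using \<open>S \<inter> T = {}\<close> by blast
  then show "x \<in> J"
    using ab meets \<open>S \<subseteq> I\<close> \<open>T \<subseteq> I\<close> by blast
qed

context indep_matroid
begin

lemma halve_family_removing_element:
  assumes "indep J" "e \<in> J" "finite I"
    and circuits: "\<forall>i\<in>I. circuit E indep (f i)"
    and meets: "\<forall>i\<in>I. \<forall>j\<in>I. i \<noteq> j \<longrightarrow> f i \<inter> f j \<subseteq> J"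
  obtains I' h where "I' \<subseteq> I" "card I div 2 \<le> card I'"
    "\<forall>i\<in>I'. circuit E indep (h i)"
    "\<forall>i\<in>I'. \<forall>j\<in>I'. i \<noteq> j \<longrightarrow> h i \<inter> h j \<subseteq> J - {e}"
    "\<Union>(h ` I') \<subseteq> \<Union>(f ` I) - {e}"
proof -
  define A where "A = {i\<in>I. e \<notin> f i}"
  define B where "B = {i\<in>I. e \<in> f i}"
  have I_split: "I = A \<union> B" "A \<inter> B = {}"
    by (auto simp: A_def B_def)
  have e_notin_A: "e \<notin> f i" if "i \<in> A" for i
    using that by (simp add: A_def)
  have e_in_B: "e \<in> f i" if "i \<in> B" for i
    using that by (simp add: B_def)
  obtain B1 p where B1: "B1 \<subseteq> B" "card B1 = card B div 2"
    and p: "inj_on p B1" "p ` B1 \<subseteq> B - B1"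
    using half_pairing[of B] \<open>finite I\<close> I_split by blast
  have "\<exists>C. circuit E indep C \<and> C \<subseteq> f i \<union> f (p i) - {e}" if "i \<in> B1" for i
  proof (rule circuit_elimination)
    have i: "i \<in> I" "p i \<in> I" "i \<noteq> p i"
      using that B1 p I_split by auto
    then show "circuit E indep (f i)" "circuit E indep (f (p i))"
      using circuits by blast+
    show "f i \<noteq> f (p i)"
      using i meets circuits circuit_not_subset_indep[OF _ \<open>indep J\<close>] by force
    show "e \<in> f i \<inter> f (p i)"
      using that B1 p e_in_B by auto
  qed
  then obtain g where g: "\<And>i. i \<in> B1 \<Longrightarrow> circuit E indep (g i) \<and> g i \<subseteq> f i \<union> f (p i) - {e}"
    by metis
  define S where "S i = (if i \<in> A then {i} else {i, p i})" for i
  define h where "h i = (if i \<in> A then f i else g i)" for i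
  have A_B1: "A \<inter> B1 = {}" "A \<union> B1 \<subseteq> I"
    using B1 I_split by blast+
  have S_sub: "S i \<subseteq> I" if "i \<in> A \<union> B1" for i
    using that A_B1 B1 p I_split by (auto simp: S_def)
  have h_sub: "h i \<subseteq> \<Union>(f ` S i) - {e}" if "i \<in> A \<union> B1" for i
  proof (cases "i \<in> A")
    case True
    then show ?thesis
      using e_notin_A by (simp add: h_def S_def)
  next
    case False
    then show ?thesis
      using that g[of i] by (auto simp: h_def S_def)
  qed
  have S_disjoint: "S i \<inter> S j = {}" if "i \<in> A \<union> B1" "j \<in> A \<union> B1" "i \<noteq> j" for i j
  proof -
    have "p ` B1 \<inter> (A \<union> B1) = {}"
      using p(2) I_split by blast
    then show ?thesis
      using that A_B1 p(1) by (cases "i \<in> A"; cases "j \<in> A") (auto simp: S_def inj_on_def)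
  qed
  show ?thesis
  proof (rule that[of "A \<union> B1" h])
    show "A \<union> B1 \<subseteq> I"
      using A_B1 by blast
    have "card I = card A + card B"
      using \<open>finite I\<close> I_split by (metis card_Un_disjoint finite_Un)
    moreover have "card (A \<union> B1) = card A + card B1"
      using A_B1 \<open>finite I\<close> finite_subset by (intro card_Un_disjoint) auto
    ultimately show "card I div 2 \<le> card (A \<union> B1)"
      using B1 by simp
    show "\<forall>i\<in>A \<union> B1. circuit E indep (h i)"
      using A_B1 circuits g by (auto simp: h_def)
    show "\<forall>i\<in>A \<union> B1. \<forall>j\<in>A \<union> B1. i \<noteq> j \<longrightarrow> h i \<inter> h j \<subseteq> J - {e}"
    proof (intro ballI impI)
      fix i j
      assume ij: "i \<in> A \<union> B1" "j \<in> A \<union> B1" "i \<noteq> j"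
      have "\<Union>(f ` S i) \<inter> \<Union>(f ` S j) \<subseteq> J"
        using meets S_sub[OF ij(1)] S_sub[OF ij(2)] S_disjoint[OF ij]
        by (rule inter_unions_of_disjoint_subfamilies)
      then show "h i \<inter> h j \<subseteq> J - {e}"
        using h_sub[OF ij(1)] h_sub[OF ij(2)] by blast
    qed
    show "\<Union>(h ` (A \<union> B1)) \<subseteq> \<Union>(f ` I) - {e}"
    proof (rule UN_least)
      fix i
      assume "i \<in> A \<union> B1"
      then show "h i \<subseteq> \<Union>(f ` I) - {e}"
        using h_sub[of i] S_sub[of i] by blast
    qed
  qed
qed

lemma circuit_in_union_avoiding_common_part:
  assumes "indep J" "finite I" "2 ^ card J \<le> card I"
    and "\<forall>i\<in>I. circuit E indep (f i)"
    and "\<forall>i\<in>I. \<forall>j\<in>I. i \<noteq> j \<longrightarrow> f i \<inter> f j \<subseteq> J"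
  shows "\<exists>C. circuit E indep C \<and> C \<subseteq> \<Union>(f ` I) - J"
  using assms
proof (induction "card J" arbitrary: J I f)
  case 0
  have "J = {}"
    using "0.hyps" "0.prems"(1) indep_finite by simp
  moreover obtain i where "i \<in> I"
    using "0.prems"(3) by fastforce
  ultimately show ?case
    using "0.prems"(4) by blast
next
  case (Suc n)
  have "J \<noteq> {}"
    using Suc.hyps(2) by auto
  then obtain e where e: "e \<in> J"
    by blast
  obtain I' h where I': "I' \<subseteq> I" "card I div 2 \<le> card I'"
    and h: "\<forall>i\<in>I'. circuit E indep (h i)"
      "\<forall>i\<in>I'. \<forall>j\<in>I'. i \<noteq> j \<longrightarrow> h i \<inter> h j \<subseteq> J - {e}"
      "\<Union>(h ` I') \<subseteq> \<Union>(f ` I) - {e}"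
    by (rule halve_family_removing_element[OF Suc.prems(1) e Suc.prems(2,4,5)])
  have card_J': "card (J - {e}) = n"
    using Suc.hyps(2) e by simp
  have "\<exists>C. circuit E indep C \<and> C \<subseteq> \<Union>(h ` I') - (J - {e})"
  proof (rule Suc.hyps(1))
    show "n = card (J - {e})"
      using card_J' by simp
    show "indep (J - {e})"
      using Suc.prems(1) indep_subset by blast
    show "finite I'"
      using I'(1) Suc.prems(2) finite_subset by blast
    have "2 * 2 ^ n \<le> card I"
      using Suc.prems(3) by (simp flip: Suc.hyps(2))
    then show "2 ^ card (J - {e}) \<le> card I'"
      using I'(2) card_J' by simp
  qed (fact h(1), fact h(2))
  then obtain C where "circuit E indep C" "C \<subseteq> \<Union>(h ` I') - (J - {e})"
    by blast
  then show ?case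
    using h(3) by blast
qed

end

theorem lemma3p1:
  fixes E :: "'a set" and indep :: "'a set \<Rightarrow> bool"
    and k :: nat and \<C> :: "'a set set" and J :: "'a set"
  assumes "matroid E indep"
    and "\<forall>C\<in>\<C>. circuit E indep C"
    and "J \<subseteq> E" and "card J \<le> k"
    and "\<forall>C\<in>\<C>. \<forall>C'\<in>\<C>. C \<noteq> C' \<longrightarrow> C \<inter> C' = J"
  shows "\<forall>\<D>. \<D> \<subseteq> \<C> \<and> finite \<D> \<and> card \<D> = 2 ^ k \<longrightarrow>
           (\<exists>C. circuit E indep C \<and> C \<subseteq> \<Union>\<D> - J)"
proof (intro allI impI)
  fix \<D>
  assume \<D>: "\<D> \<subseteq> \<C> \<and> finite \<D> \<and> card \<D> = 2 ^ k"
  interpret indep_matroid E indep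
    by (rule indep_matroid.intro) fact
  have "indep J"
  proof (cases "k = 0")
    case True
    then show ?thesis
      using assms(3,4) finite_ground finite_subset indep_empty by fastforce
  next
    case False
    then have "(2::nat) ^ 1 \<le> 2 ^ k"
      by (intro power_increasing) auto
    then have "2 \<le> card \<D>"
      using \<D> by simp
    then obtain C C' where "C \<in> \<D>" "C' \<in> \<D>" "C \<noteq> C'"
      by (metis card_le_Suc0_iff_eq not_less_eq_eq numeral_2_eq_2 \<D>)
    then show ?thesis
      using \<D> assms(2,5) indep_inter_circuits by (metis subsetD)
  qed
  moreover have "2 ^ card J \<le> card \<D>"
    using \<D> assms(4) by (simp add: power_increasing)
  moreover have "\<forall>C\<in>\<D>. circuit E indep C" "\<forall>C\<in>\<D>. \<forall>C'\<in>\<D>. C \<noteq> C' \<longrightarrow> C \<inter> C' \<subseteq> J"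
    using \<D> assms(2,5) by blast+
  ultimately show "\<exists>C. circuit E indep C \<and> C \<subseteq> \<Union>\<D> - J"
    using circuit_in_union_avoiding_common_part[of J \<D> "\<lambda>C. C"] \<D> by simp
qed

end
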